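(* With $V$, $\Delta^+$ and $f$ as in the context (type $E_7$), the map $f:\Delta^+\cup\{0\}\to V$ is a bijection.
   Context: Let $F=\{0,1,2,3\}$ be the group $\mathbb{Z}/2\times\mathbb{Z}/2$, with operation $a\oplus b$ given by binary addition without carry; it is a 2-dimensional $\mathbb{Z}/2$-vector space with symplectic form $(a|a')=0$ if $a=0$, $a'=0$ or $a=a'$, and $(a|a')=1$ otherwise. Let $V=F^3$, writing $(a,b,c)$ as $abc$, with coordinatewise $\oplus$ and form $(abc|a'b'c')=(a|a')+(b|b')+(c|c')\in\mathbb{Z}/2$. Let $\Delta$ be the root system of type $E_7$ with simple roots $\alpha_1,\dots,\alpha_7$, where $\langle\alpha_i,\alpha_i\rangle=2$, $\langle\alpha_i,\alpha_j\rangle=-1$ if $\{i,j\}\in\{\{1,3\},\{3,4\},\{4,5\},\{5,6\},\{6,7\},\{2,4\}\}$, and $0$ otherwise. Let $\Lambda=\bigoplus_i\mathbb{Z}\alpha_i$ and $\Delta^+$ the positive roots. Let $f:\Lambda\to V$ be the group homomorphism with $f(\alpha_1)=100$, $f(\alpha_2)=030$, $f(\alpha_3)=300$, $f(\alpha_4)=111$, $f(\alpha_5)=003$, $f(\alpha_6)=001$, $f(\alpha_7)=033$. *)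

theory Defs
  imports Main
begin

text \<open>F is encoded as {0,1,2,3} :: nat with addition = bitwise xor.
  V = F^3 is encoded as triples of such numbers, written abc = (a,b,c).\<close>

definition F_set :: "nat set" where
  "F_set = {0,1,2,3}"

definition V_set :: "(nat \<times> nat \<times> nat) set" where
  "V_set = F_set \<times> F_set \<times> F_set"

definition vxor :: "nat \<times> nat \<times> nat \<Rightarrow> nat \<times> nat \<times> nat \<Rightarrow> nat \<times> nat \<times> nat" where
  "vxor u v = (xor (fst u) (fst v), xor (fst (snd u)) (fst (snd v)), xor (snd (snd u)) (snd (snd v)))"

text \<open>Elements of \<Lambda> = \<Oplus> Z \<alpha>_i are coefficient functions c :: nat \<Rightarrow> int
  with c i = 0 for i outside {1..7}; c stands for \<Sum> c i \<alpha>_i.\<close>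

definition Lambda :: "(nat \<Rightarrow> int) set" where
  "Lambda = {c. \<forall>i. i \<notin> {1..7} \<longrightarrow> c i = 0}"

definition E7_edges :: "(nat \<times> nat) set" where
  "E7_edges = {(1,3),(3,4),(4,5),(5,6),(6,7),(2,4)}"

definition cartan :: "nat \<Rightarrow> nat \<Rightarrow> int" where
  "cartan i j = (if i = j then 2 else if (i,j) \<in> E7_edges \<or> (j,i) \<in> E7_edges then -1 else 0)"

definition form :: "(nat \<Rightarrow> int) \<Rightarrow> (nat \<Rightarrow> int) \<Rightarrow> int" where
  "form c d = (\<Sum>i\<in>{1..7}. \<Sum>j\<in>{1..7}. c i * d j * cartan i j)"

definition sroot :: "nat \<Rightarrow> (nat \<Rightarrow> int)" where
  "sroot i = (\<lambda>j. if j = i then 1 else 0)"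

definition wrefl :: "nat \<Rightarrow> (nat \<Rightarrow> int) \<Rightarrow> (nat \<Rightarrow> int)" where
  "wrefl i \<beta> = (\<lambda>j. \<beta> j - form \<beta> (sroot i) * sroot i j)"

text \<open>The root system \<Delta> is the orbit of the simple roots under the Weyl group,
  i.e. the smallest set containing the simple roots and closed under the simple reflections.\<close>

inductive_set roots_E7 :: "(nat \<Rightarrow> int) set" where
  simple: "i \<in> {1..7} \<Longrightarrow> sroot i \<in> roots_E7"
| reflect: "\<beta> \<in> roots_E7 \<Longrightarrow> i \<in> {1..7} \<Longrightarrow> wrefl i \<beta> \<in> roots_E7"

definition pos_roots_E7 :: "(nat \<Rightarrow> int) set" where
  "pos_roots_E7 = {\<beta> \<in> roots_E7. \<forall>i. 0 \<le> \<beta> i}"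

definition f_simple :: "nat \<Rightarrow> nat \<times> nat \<times> nat" where
  "f_simple i = (if i = 1 then (1,0,0) else if i = 2 then (0,3,0) else if i = 3 then (3,0,0)
     else if i = 4 then (1,1,1) else if i = 5 then (0,0,3) else if i = 6 then (0,0,1)
     else if i = 7 then (0,3,3) else (0,0,0))"

text \<open>Since V has exponent 2, f(\<Sum> c_i \<alpha>_i) = \<Oplus> over i with c_i odd of f(\<alpha>_i).\<close>

fun f_partial :: "(nat \<Rightarrow> int) \<Rightarrow> nat \<Rightarrow> nat \<times> nat \<times> nat" where
  "f_partial c 0 = (0,0,0)"
| "f_partial c (Suc n) = vxor (f_partial c n) (if odd (c (Suc n)) then f_simple (Suc n) else (0,0,0))"

definition fE7 :: "(nat \<Rightarrow> int) \<Rightarrow> nat \<times> nat \<times> nat" where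
  "fE7 c = f_partial c 7"

end

theory Submission
  imports Defs
begin

text \<open>The 63 positive roots of \<open>E\<^sub>7\<close> are listed by their coordinates with respect to the
  simple roots. The list contains the simple roots and is closed up to sign under the simple
  reflections, so every root is \<open>\<plusminus>\<close> a listed vector; conversely every listed vector is reached
  from a simple root by a chain of simple reflections, each raising the height, so it is a
  root. It remains to evaluate \<open>f\<close> on \<open>0\<close> and the 63 listed roots and observe that the
  64 values are exactly the elements of \<open>V\<close>.\<close>

text \<open>A list \<open>xs\<close> stands for \<open>\<Sum>j. xs ! (j - 1) \<alpha>\<^sub>j\<close>: lists are indexed from 0, simple roots from 1.\<close>

definition of_coords :: "int list \<Rightarrow> nat \<Rightarrow> int" where
  "of_coords xs = (\<lambda>j. if j \<in> {1..7} then xs ! (j - 1) else 0)"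

definition unit_coords :: "nat \<Rightarrow> int list" where
  "unit_coords i = map (\<lambda>j. if j = i then 1 else 0) [1..<8]"

definition E7_cartan :: "int list list" where
  "E7_cartan =
    [[ 2, 0,-1, 0, 0, 0, 0],
     [ 0, 2, 0,-1, 0, 0, 0],
     [-1, 0, 2,-1, 0, 0, 0],
     [ 0,-1,-1, 2,-1, 0, 0],
     [ 0, 0, 0,-1, 2,-1, 0],
     [ 0, 0, 0, 0,-1, 2,-1],
     [ 0, 0, 0, 0, 0,-1, 2]]"

definition pairing_coords :: "int list \<Rightarrow> nat \<Rightarrow> int" where
  "pairing_coords xs i = (\<Sum>k\<leftarrow>[1..<8]. xs ! (k - 1) * E7_cartan ! (k - 1) ! (i - 1))"

definition refl_coords :: "nat \<Rightarrow> int list \<Rightarrow> int list" where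
  "refl_coords i xs = map (\<lambda>j. xs ! (j - 1) - (if j = i then pairing_coords xs i else 0)) [1..<8]"

lemma length_refl_coords [simp]: "length (refl_coords i xs) = 7"
  by (simp add: refl_coords_def)

lemma cartan_eq_E7_cartan:
  assumes "i \<in> {1..7}" "j \<in> {1..7}"
  shows "cartan i j = E7_cartan ! (i - 1) ! (j - 1)"
proof -
  have table: "E7_cartan = map (\<lambda>i. map (cartan i) [1..<8]) [1..<8]"
    by (simp add: E7_cartan_def cartan_def E7_edges_def upt_rec)
  from assms have "i - 1 < 7" "j - 1 < 7" by auto
  with assms show ?thesis unfolding table by (simp add: nth_upt)
qed

lemma form_sroot:
  assumes "i \<in> {1..7}"
  shows "form \<beta> (sroot i) = (\<Sum>k\<in>{1..7}. \<beta> k * cartan k i)"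
  using assms by (simp add: form_def sroot_def mult.assoc of_bool_def[symmetric]
      sum_distrib_left[symmetric] sum.delta)

lemma form_uminus_left: "form (- \<beta>) \<gamma> = - form \<beta> \<gamma>"
  by (simp add: form_def sum_negf)

lemma wrefl_uminus: "wrefl i (- \<beta>) = - wrefl i \<beta>"
  by (simp add: wrefl_def form_uminus_left fun_eq_iff)

lemma wrefl_involutive:
  assumes "i \<in> {1..7}"
  shows "wrefl i (wrefl i \<beta>) = \<beta>"
proof -
  let ?c = "form \<beta> (sroot i)"
  have "form (wrefl i \<beta>) (sroot i) = ?c - ?c * (\<Sum>k\<in>{1..7}. sroot i k * cartan k i)"
    using assms by (simp add: form_sroot wrefl_def left_diff_distrib sum_subtractf
        sum_distrib_left mult.assoc)
  also have "(\<Sum>k\<in>{1..7}. sroot i k * cartan k i) = 2"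
    using assms by (simp add: sroot_def of_bool_def[symmetric] cartan_def)
  finally have "form (wrefl i \<beta>) (sroot i) = - ?c"
    by simp
  then show ?thesis
    by (simp add: wrefl_def fun_eq_iff algebra_simps)
qed

lemma form_of_coords_sroot:
  assumes "i \<in> {1..7}"
  shows "form (of_coords xs) (sroot i) = pairing_coords xs i"
proof -
  have "set [1..<8] = {1..7::nat}"
    by auto
  then have "form (of_coords xs) (sroot i) = (\<Sum>k\<leftarrow>[1..<8]. of_coords xs k * cartan k i)"
    using assms by (simp add: form_sroot interv_sum_list_conv_sum_set_nat)
  also have "\<dots> = pairing_coords xs i"
    unfolding pairing_coords_def using assms
    by (intro arg_cong[where f = sum_list] map_cong) (auto simp: of_coords_def cartan_eq_E7_cartan)
  finally show ?thesis .
qed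

lemma wrefl_of_coords:
  assumes "i \<in> {1..7}"
  shows "wrefl i (of_coords xs) = of_coords (refl_coords i xs)"
proof
  fix j
  have "wrefl i (of_coords xs) j = of_coords xs j - pairing_coords xs i * sroot i j"
    using assms by (simp add: wrefl_def form_of_coords_sroot)
  then show "wrefl i (of_coords xs) j = of_coords (refl_coords i xs) j"
    using assms by (auto simp: of_coords_def refl_coords_def sroot_def nth_upt)
qed

lemma sroot_eq_of_coords:
  assumes "i \<in> {1..7}"
  shows "sroot i = of_coords (unit_coords i)"
  using assms by (auto simp: sroot_def of_coords_def unit_coords_def nth_upt fun_eq_iff)

lemma of_coords_map_uminus:
  assumes "length xs = 7"
  shows "of_coords (map uminus xs) = - of_coords xs"
  using assms by (auto simp: of_coords_def fun_eq_iff)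

lemma of_coords_nonneg:
  assumes "length xs = 7" "\<forall>x\<in>set xs. 0 \<le> x"
  shows "0 \<le> of_coords xs j"
  using assms by (auto simp: of_coords_def)

lemma of_coords_pos_entry:
  assumes "length xs = 7" "0 < sum_list xs"
  obtains j where "0 < of_coords xs j"
proof -
  obtain x where "x \<in> set xs" "0 < x"
    using assms(2) sum_list_nonpos[of xs] by force
  then obtain k where "k < 7" "xs ! k = x"
    using assms(1) by (auto simp: in_set_conv_nth)
  then have "0 < of_coords xs (Suc k)"
    using \<open>0 < x\<close> by (simp add: of_coords_def)
  then show ?thesis ..
qed

lemma roots_E7_of_coords_up_to_sign:
  assumes simple: "\<forall>i\<in>{1..7}. unit_coords i \<in> set L"
    and closed: "\<forall>xs\<in>set L. \<forall>i\<in>{1..7}.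
      refl_coords i xs \<in> set L \<or> map uminus (refl_coords i xs) \<in> set L"
    and "\<beta> \<in> roots_E7"
  shows "\<beta> \<in> of_coords ` set L \<or> - \<beta> \<in> of_coords ` set L"
  using assms(3)
proof induction
  case (simple i)
  then show ?case
    using assms(1) by (simp add: sroot_eq_of_coords)
next
  case (reflect \<beta> i)
  have step: "wrefl i \<gamma> \<in> of_coords ` set L \<or> - wrefl i \<gamma> \<in> of_coords ` set L"
    if listed: "\<gamma> \<in> of_coords ` set L" for \<gamma>
  proof -
    obtain xs where xs: "xs \<in> set L" "\<gamma> = of_coords xs"
      using listed by blast
    then have "refl_coords i xs \<in> set L \<or> map uminus (refl_coords i xs) \<in> set L"
      using closed reflect.hyps(2) by blast
    moreover have "wrefl i \<gamma> = of_coords (refl_coords i xs)"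
      "- wrefl i \<gamma> = of_coords (map uminus (refl_coords i xs))"
      using xs(2) reflect.hyps(2) by (simp_all add: wrefl_of_coords of_coords_map_uminus)
    ultimately show ?thesis
      by force
  qed
  from reflect.IH show ?case
  proof
    assume "\<beta> \<in> of_coords ` set L"
    then show ?case by (rule step)
  next
    assume "- \<beta> \<in> of_coords ` set L"
    then have "wrefl i (- \<beta>) \<in> of_coords ` set L \<or> - wrefl i (- \<beta>) \<in> of_coords ` set L"
      by (rule step)
    moreover have "- (- \<gamma>) = \<gamma>" for \<gamma> :: "nat \<Rightarrow> int"
      by (simp add: fun_eq_iff)
    ultimately show ?case
      unfolding wrefl_uminus by metis
  qed
qed

lemma of_coords_in_roots_E7_by_descent:
  assumes pos: "\<forall>xs\<in>set L. 0 < sum_list xs"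
    and descent: "\<forall>xs\<in>set L. (\<exists>i\<in>{1..7}. xs = unit_coords i) \<or>
      (\<exists>i\<in>{1..7}. refl_coords i xs \<in> set L \<and> sum_list (refl_coords i xs) < sum_list xs)"
    and "xs \<in> set L"
  shows "of_coords xs \<in> roots_E7"
  using assms(3)
proof (induction "nat (sum_list xs)" arbitrary: xs rule: less_induct)
  case less
  from descent less.prems consider
      (simple) i where "i \<in> {1..7}" "xs = unit_coords i"
    | (lower) i where "i \<in> {1..7}" "refl_coords i xs \<in> set L"
        "sum_list (refl_coords i xs) < sum_list xs"
    by blast
  then show ?case
  proof cases
    case simple
    then show ?thesis
      using roots_E7.simple sroot_eq_of_coords by metis
  next
    case lower
    then have "of_coords (refl_coords i xs) \<in> roots_E7"
      using less.hyps pos by fastforce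
    then have "wrefl i (of_coords (refl_coords i xs)) \<in> roots_E7"
      using lower(1) by (rule roots_E7.reflect)
    also have "wrefl i (of_coords (refl_coords i xs)) = wrefl i (wrefl i (of_coords xs))"
      using lower(1) by (simp add: wrefl_of_coords)
    also have "\<dots> = of_coords xs"
      using lower(1) by (rule wrefl_involutive)
    finally show ?thesis .
  qed
qed

definition E7_positive_coords :: "int list list" where
  "E7_positive_coords =
    [[1,0,0,0,0,0,0], [0,1,0,0,0,0,0], [0,0,1,0,0,0,0], [0,0,0,1,0,0,0], [0,0,0,0,1,0,0], [0,0,0,0,0,1,0], [0,0,0,0,0,0,1],
     [1,0,1,0,0,0,0], [0,1,0,1,0,0,0], [0,0,1,1,0,0,0], [0,0,0,1,1,0,0], [0,0,0,0,1,1,0], [0,0,0,0,0,1,1],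
     [1,0,1,1,0,0,0], [0,1,1,1,0,0,0], [0,1,0,1,1,0,0], [0,0,1,1,1,0,0], [0,0,0,1,1,1,0], [0,0,0,0,1,1,1],
     [1,1,1,1,0,0,0], [1,0,1,1,1,0,0], [0,1,1,1,1,0,0], [0,1,0,1,1,1,0], [0,0,1,1,1,1,0], [0,0,0,1,1,1,1],
     [1,1,1,1,1,0,0], [1,0,1,1,1,1,0], [0,1,1,2,1,0,0], [0,1,1,1,1,1,0], [0,1,0,1,1,1,1], [0,0,1,1,1,1,1],
     [1,1,1,2,1,0,0], [1,1,1,1,1,1,0], [1,0,1,1,1,1,1], [0,1,1,2,1,1,0], [0,1,1,1,1,1,1],
     [1,1,2,2,1,0,0], [1,1,1,2,1,1,0], [1,1,1,1,1,1,1], [0,1,1,2,2,1,0], [0,1,1,2,1,1,1],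
     [1,1,2,2,1,1,0], [1,1,1,2,2,1,0], [1,1,1,2,1,1,1], [0,1,1,2,2,1,1],
     [1,1,2,2,2,1,0], [1,1,2,2,1,1,1], [1,1,1,2,2,1,1], [0,1,1,2,2,2,1],
     [1,1,2,3,2,1,0], [1,1,2,2,2,1,1], [1,1,1,2,2,2,1],
     [1,2,2,3,2,1,0], [1,1,2,3,2,1,1], [1,1,2,2,2,2,1],
     [1,2,2,3,2,1,1], [1,1,2,3,2,2,1],
     [1,2,2,3,2,2,1], [1,1,2,3,3,2,1],
     [1,2,2,3,3,2,1],
     [1,2,2,4,3,2,1],
     [1,2,3,4,3,2,1],
     [2,2,3,4,3,2,1]]"

lemma E7_positive_coords_positive:
  "\<forall>xs\<in>set E7_positive_coords. length xs = 7 \<and> (\<forall>x\<in>set xs. 0 \<le> x) \<and> 0 < sum_list xs"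
  by code_simp

lemma unit_coords_in_E7_positive_coords: "\<forall>i\<in>{1..7}. unit_coords i \<in> set E7_positive_coords"
  by code_simp

text \<open>The finite checks below quantify over precomputed lists of reflected vectors: this way
  \<open>code_simp\<close> never has to decide a membership test for a symbolic vector.\<close>

lemma E7_positive_coords_refl_closed:
  "\<forall>xs\<in>set E7_positive_coords. \<forall>i\<in>{1..7}.
    refl_coords i xs \<in> set E7_positive_coords \<or> map uminus (refl_coords i xs) \<in> set E7_positive_coords"
proof -
  have "\<forall>ys\<in>set [refl_coords i xs. xs \<leftarrow> E7_positive_coords, i \<leftarrow> [1..<8]].
      ys \<in> set E7_positive_coords \<or> map uminus ys \<in> set E7_positive_coords"
    by code_simp
  then show ?thesis
    by auto
qed

lemma E7_positive_coords_descent: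
  "\<forall>xs\<in>set E7_positive_coords. (\<exists>i\<in>{1..7}. xs = unit_coords i) \<or>
    (\<exists>i\<in>{1..7}. refl_coords i xs \<in> set E7_positive_coords \<and>
      sum_list (refl_coords i xs) < sum_list xs)"
proof -
  have "\<forall>(xs, ys)\<in>set [(xs, map (\<lambda>i. refl_coords i xs) [1..<8]). xs \<leftarrow> E7_positive_coords].
      xs \<in> set (map unit_coords [1..<8]) \<or>
      (\<exists>y\<in>set ys. y \<in> set E7_positive_coords \<and> sum_list y < sum_list xs)"
    by code_simp
  then show ?thesis
    by (auto simp: atLeastAtMost_upt)
qed

lemma fE7_of_coords_bij_betw:
  "bij_betw (fE7 \<circ> of_coords) (set (replicate 7 0 # E7_positive_coords)) V_set"
proof -
  have table: "map (fE7 \<circ> of_coords) (replicate 7 0 # E7_positive_coords) =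
      [(0,0,0), (1,0,0), (0,3,0), (3,0,0), (1,1,1), (0,0,3), (0,0,1), (0,3,3),
       (2,0,0), (1,2,1), (2,1,1), (1,1,2), (0,0,2), (0,3,2), (3,1,1), (2,2,1),
       (1,2,2), (2,1,2), (1,1,3), (0,3,1), (3,2,1), (3,1,2), (2,2,2), (1,2,3),
       (2,1,3), (1,2,0), (3,2,2), (3,1,3), (3,3,3), (2,2,3), (1,1,0), (2,2,0),
       (2,3,3), (3,2,3), (3,2,0), (3,3,2), (2,1,0), (1,3,3), (2,3,2), (3,1,0),
       (3,3,1), (3,0,1), (1,3,2), (2,3,1), (2,0,1), (3,0,2), (1,3,1), (1,0,1),
       (2,0,2), (3,0,3), (0,2,0), (1,0,2), (2,0,3), (0,1,0), (0,1,3), (1,0,3),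
       (0,2,3), (0,1,2), (0,2,2), (0,1,1), (0,2,1), (1,3,0), (2,3,0), (3,3,0)]"
    by code_simp
  have "distinct (map (fE7 \<circ> of_coords) (replicate 7 0 # E7_positive_coords))"
    unfolding table by code_simp
  moreover have "set (map (fE7 \<circ> of_coords) (replicate 7 0 # E7_positive_coords)) = V_set"
    unfolding table by code_simp
  ultimately show ?thesis
    unfolding bij_betw_def distinct_map set_map by blast
qed

lemma pos_roots_E7_eq: "pos_roots_E7 = of_coords ` set E7_positive_coords"
proof
  show "pos_roots_E7 \<subseteq> of_coords ` set E7_positive_coords"
  proof
    fix \<beta> assume "\<beta> \<in> pos_roots_E7"
    then have root: "\<beta> \<in> roots_E7" and nonneg: "\<forall>j. 0 \<le> \<beta> j"
      by (auto simp: pos_roots_E7_def)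
    have "- \<beta> \<notin> of_coords ` set E7_positive_coords"
    proof
      assume "- \<beta> \<in> of_coords ` set E7_positive_coords"
      then obtain xs where "xs \<in> set E7_positive_coords" "- \<beta> = of_coords xs"
        by blast
      moreover obtain j where "0 < of_coords xs j"
        using E7_positive_coords_positive of_coords_pos_entry calculation(1) by blast
      ultimately show False
        using nonneg[rule_format, of j] by (metis neg_0_less_iff_less not_less uminus_apply)
    qed
    then show "\<beta> \<in> of_coords ` set E7_positive_coords"
      using roots_E7_of_coords_up_to_sign[OF unit_coords_in_E7_positive_coords
          E7_positive_coords_refl_closed root] by blast
  qed
next
  show "of_coords ` set E7_positive_coords \<subseteq> pos_roots_E7"
    using of_coords_in_roots_E7_by_descent[OF _ E7_positive_coords_descent]
      E7_positive_coords_positive of_coords_nonneg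
    by (auto simp: pos_roots_E7_def)
qed

theorem mainTheorem5:
  shows "bij_betw fE7 (pos_roots_E7 \<union> {(\<lambda>_. 0)}) V_set"
proof -
  have "(\<lambda>_. 0) = of_coords (replicate 7 0)"
    by (auto simp: of_coords_def fun_eq_iff)
  then have domain: "pos_roots_E7 \<union> {(\<lambda>_. 0)} = of_coords ` set (replicate 7 0 # E7_positive_coords)"
    by (simp add: pos_roots_E7_eq)
  from fE7_of_coords_bij_betw
  have "inj_on fE7 (of_coords ` set (replicate 7 0 # E7_positive_coords))"
    and "fE7 ` of_coords ` set (replicate 7 0 # E7_positive_coords) = V_set"
    by (auto simp: bij_betw_def image_comp intro: inj_on_imageI)
  then show ?thesis
    unfolding domain bij_betw_def by blast
qed

end
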